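(* For $i=1,2$ let $\mathbf{L}_i=(L_i,\le)$ be a nontrivial finite join-semilattice with greatest element $1$ satisfying property $( * )$, and let $(R_i,\vee,\circ)$ be a subsemiring of $(\mathrm{JM}_1(\mathbf{L}_i),\vee,\circ)$ such that $f_{a,b}\in R_i$ for all $a\in L_i\setminus\{1\}$, $b\in L_i$, and every $f\in R_i$ satisfies $f_{a,b}\le f$ for some $a\in L_i\setminus\{1\}$, $b\in L_i$. If $(R_1,\vee,\circ)$ and $(R_2,\vee,\circ)$ are isomorphic semirings, then $\mathbf{L}_1$ and $\mathbf{L}_2$ are isomorphic.
   Context: $\mathrm{JM}_1(\mathbf{L})$ is the set of maps $f:L\to L$ preserving binary joins with $f(1)=1$, a semiring under pointwise join and composition, ordered pointwise. $f_{a,b}(x)=b$ if $x\le a$ and $1$ otherwise. A finite semilattice with greatest element $1$ satisfies $( * )$ if there exists $u$ with $1\ne u\vee x$ for all $x\ne 1$. *)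

theory Defs
  imports Main
begin

definition JM1 :: "('a::{semilattice_sup,order_top} \<Rightarrow> 'a) set" where
  "JM1 = {f. (\<forall>x y. f (sup x y) = sup (f x) (f y)) \<and> f top = top}"

definition fab :: "'a::{semilattice_sup,order_top} \<Rightarrow> 'a \<Rightarrow> 'a \<Rightarrow> 'a" where
  "fab a b = (\<lambda>x. if x \<le> a then b else top)"

definition star_prop :: "'a::{semilattice_sup,order_top} itself \<Rightarrow> bool" where
  "star_prop _ = (\<exists>u::'a. \<forall>x. x \<noteq> top \<longrightarrow> sup u x \<noteq> top)"

definition subsemiring_JM1 :: "('a::{semilattice_sup,order_top} \<Rightarrow> 'a) set \<Rightarrow> bool" where
  "subsemiring_JM1 R = (R \<subseteq> JM1 \<and> R \<noteq> {} \<and>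
     (\<forall>f\<in>R. \<forall>g\<in>R. (\<lambda>x. sup (f x) (g x)) \<in> R \<and> f \<circ> g \<in> R))"

definition semiring_iso :: "('a \<Rightarrow> 'a::semilattice_sup) set \<Rightarrow> ('b \<Rightarrow> 'b::semilattice_sup) set \<Rightarrow> bool" where
  "semiring_iso R1 R2 = (\<exists>\<phi>. bij_betw \<phi> R1 R2 \<and>
     (\<forall>f\<in>R1. \<forall>g\<in>R1. \<phi> (\<lambda>x. sup (f x) (g x)) = (\<lambda>y. sup (\<phi> f y) (\<phi> g y))
                    \<and> \<phi> (f \<circ> g) = \<phi> f \<circ> \<phi> g))"

end

theory Submission
  imports Defs
begin

text \<open>
  For \<open>a \<noteq> 1\<close> the maps \<open>f\<^sub>a\<^sub>,\<^sub>d\<close> (\<open>d \<in> L\<close>) form a copy of \<open>L\<close> inside \<open>R\<close>, closed under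
  joins, and every right multiple \<open>f \<circ> f\<^sub>a\<^sub>,\<^sub>a = f\<^sub>a\<^sub>,\<^sub>f\<^sub>(\<^sub>a\<^sub>)\<close> lies in it. A semiring isomorphism
  \<open>\<phi> : R\<^sub>1 \<rightarrow> R\<^sub>2\<close> therefore carries \<open>L\<^sub>1\<close> join-isomorphically onto a set containing the
  right multiples \<open>R\<^sub>2 \<circ> \<phi>(f\<^sub>a\<^sub>,\<^sub>a)\<close>. Since \<open>\<phi>\<close> fixes the absorbing constant map \<open>1\<close>, the element
  \<open>\<phi>(f\<^sub>a\<^sub>,\<^sub>a)\<close> takes some value \<open>c \<noteq> 1\<close>, and \<open>d \<mapsto> f\<^sub>c\<^sub>,\<^sub>d \<circ> \<phi>(f\<^sub>a\<^sub>,\<^sub>a)\<close> embeds \<open>L\<^sub>2\<close> into those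
  right multiples. Hence \<open>|L\<^sub>2| \<le> |L\<^sub>1|\<close>, by symmetry equality holds, and for finite
  semilattices the two join-embeddings then compose to an isomorphism.
\<close>

definition sup_hom :: "('a::sup \<Rightarrow> 'b::sup) \<Rightarrow> bool" where
  "sup_hom h \<longleftrightarrow> (\<forall>x y. h (sup x y) = sup (h x) (h y))"

definition right_multiples :: "('a \<Rightarrow> 'a) set \<Rightarrow> ('a \<Rightarrow> 'a) \<Rightarrow> ('a \<Rightarrow> 'a) set" where
  "right_multiples R g = (\<lambda>f. f \<circ> g) ` R"

lemma sup_hom_fab: "sup_hom (fab a)"
  by (simp add: sup_hom_def fab_def fun_eq_iff)

lemma inj_fab: "inj (fab a)"
  by (rule injI) (metis fab_def order_refl)

lemma comp_fab: "f top = top \<Longrightarrow> f \<circ> fab a b = fab a (f b)"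
  by (simp add: fab_def fun_eq_iff)

lemma fab_top: "fab a top = (\<lambda>_. top)"
  by (simp add: fab_def)

lemma JM1_top: "f \<in> JM1 \<Longrightarrow> f top = top"
  by (simp add: JM1_def)

lemma semiring_iso_iff:
  "semiring_iso R1 R2 \<longleftrightarrow> (\<exists>\<phi>. bij_betw \<phi> R1 R2 \<and>
     (\<forall>f\<in>R1. \<forall>g\<in>R1. \<phi> (sup f g) = sup (\<phi> f) (\<phi> g) \<and> \<phi> (f \<circ> g) = \<phi> f \<circ> \<phi> g))"
  by (simp add: semiring_iso_def sup_fun_def)

lemma semiring_iso_sym:
  assumes iso: "semiring_iso R1 R2" and sub: "subsemiring_JM1 R1"
  shows "semiring_iso R2 R1"
proof -
  obtain \<phi> where bij: "bij_betw \<phi> R1 R2"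
    and hom: "\<forall>f\<in>R1. \<forall>g\<in>R1. \<phi> (sup f g) = sup (\<phi> f) (\<phi> g) \<and> \<phi> (f \<circ> g) = \<phi> f \<circ> \<phi> g"
    using iso by (auto simp: semiring_iso_iff)
  have closed: "sup f g \<in> R1" "f \<circ> g \<in> R1" if "f \<in> R1" "g \<in> R1" for f g
    using sub that by (auto simp: subsemiring_JM1_def sup_fun_def)
  define \<psi> where "\<psi> = inv_into R1 \<phi>"
  have \<psi>_bij: "bij_betw \<psi> R2 R1"
    using bij by (simp add: \<psi>_def bij_betw_inv_into)
  have \<phi>_\<psi>: "\<phi> (\<psi> f) = f" if "f \<in> R2" for f
    using bij that by (simp add: \<psi>_def bij_betw_inv_into_right)
  have \<psi>_\<phi>: "\<psi> (\<phi> f) = f" if "f \<in> R1" for f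
    using bij that by (simp add: \<psi>_def bij_betw_inv_into_left)
  have "\<psi> (sup f g) = sup (\<psi> f) (\<psi> g) \<and> \<psi> (f \<circ> g) = \<psi> f \<circ> \<psi> g"
    if "f \<in> R2" "g \<in> R2" for f g
  proof -
    have R1: "\<psi> f \<in> R1" "\<psi> g \<in> R1"
      using \<psi>_bij that by (simp_all add: bij_betw_apply)
    have "sup f g = \<phi> (sup (\<psi> f) (\<psi> g))" "f \<circ> g = \<phi> (\<psi> f \<circ> \<psi> g)"
      using hom R1 by (simp_all add: \<phi>_\<psi> that)
    thus ?thesis
      using closed[OF R1] by (simp add: \<psi>_\<phi>)
  qed
  thus ?thesis
    using \<psi>_bij by (auto simp: semiring_iso_iff)
qed

text \<open>The constant map \<open>1\<close> is the zero of \<open>(JM\<^sub>1(L), \<circ>)\<close>, so an isomorphism must preserve it.\<close>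

lemma semiring_iso_const_top:
  fixes R1 :: "('a::{semilattice_sup,order_top} \<Rightarrow> 'a) set"
    and R2 :: "('b::{semilattice_sup,order_top} \<Rightarrow> 'b) set"
  assumes bij: "bij_betw \<phi> R1 R2"
    and hom: "\<forall>f\<in>R1. \<forall>g\<in>R1. \<phi> (f \<circ> g) = \<phi> f \<circ> \<phi> g"
    and R1: "R1 \<subseteq> JM1" "(\<lambda>_. top) \<in> R1"
    and R2: "(\<lambda>_. top) \<in> R2"
  shows "\<phi> (\<lambda>_. top) = (\<lambda>_. top)"
proof -
  obtain f where f: "f \<in> R1" "\<phi> f = (\<lambda>_. top)"
    using R2 bij by (metis bij_betw_imp_surj_on imageE)
  have "f \<circ> (\<lambda>_::'a. top) = (\<lambda>_. top)"
    using f(1) R1(1) JM1_top by (auto simp: fun_eq_iff)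
  hence "\<phi> (\<lambda>_. top) = \<phi> (f \<circ> (\<lambda>_. top))" by (simp only:)
  also have "\<dots> = \<phi> f \<circ> \<phi> (\<lambda>_. top)"
    using hom f(1) R1(2) by blast
  finally show ?thesis by (simp add: f(2) o_def)
qed

lemma right_multiples_fab:
  assumes "R \<subseteq> JM1"
  shows "right_multiples R (fab a a) \<subseteq> range (fab a)"
  using assms by (auto simp: right_multiples_def comp_fab JM1_top)

lemma right_multiples_semiring_iso:
  assumes bij: "bij_betw \<phi> R1 R2"
    and hom: "\<forall>f\<in>R1. \<forall>g\<in>R1. \<phi> (f \<circ> g) = \<phi> f \<circ> \<phi> g"
    and g: "g \<in> R1"
  shows "right_multiples R2 (\<phi> g) = \<phi> ` right_multiples R1 g"
proof -
  have "right_multiples R2 (\<phi> g) = (\<lambda>f. \<phi> f \<circ> \<phi> g) ` R1"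
    using bij by (auto simp: right_multiples_def bij_betw_def image_image[symmetric])
  also have "\<dots> = (\<lambda>f. \<phi> (f \<circ> g)) ` R1"
    using hom g by (intro image_cong) auto
  finally show ?thesis
    by (simp add: right_multiples_def image_image)
qed

lemma sup_hom_embedding_into_right_multiples:
  fixes R :: "('a::{semilattice_sup,order_top} \<Rightarrow> 'a) set"
  assumes fabR: "\<forall>a b. a \<noteq> top \<longrightarrow> fab a b \<in> R"
    and g: "g \<noteq> (\<lambda>_. top)"
  shows "\<exists>e::'a \<Rightarrow> 'a \<Rightarrow> 'a. inj e \<and> sup_hom e \<and> range e \<subseteq> right_multiples R g"
proof -
  obtain x where x: "g x \<noteq> top" using g by auto
  define e where "e d = fab (g x) d \<circ> g" for d
  have "inj e"
  proof (rule injI)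
    fix u v assume "e u = e v"
    hence "e u x = e v x" by simp
    thus "u = v" by (simp add: e_def fab_def)
  qed
  moreover have "sup_hom e"
    by (auto simp: sup_hom_def e_def fab_def fun_eq_iff)
  moreover have "e d \<in> right_multiples R g" for d
    unfolding right_multiples_def e_def using fabR x
    by (intro image_eqI[where x = "fab (g x) d"]) auto
  ultimately show ?thesis by blast
qed

lemma card_le_of_embeddings:
  fixes A :: "'a::finite \<Rightarrow> 'c" and B :: "'b::finite \<Rightarrow> 'c"
  assumes "inj A" "inj B" "range B \<subseteq> range A"
  shows "card (UNIV :: 'b set) \<le> card (UNIV :: 'a set)"
  using assms card_mono[OF finite_imageI[of UNIV A], of "range B"]
  by (simp add: card_image)

text \<open>Counting shows that \<open>B\<close> is onto the range of \<open>A\<close>, so \<open>inv B \<circ> A\<close> is the isomorphism.\<close>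

lemma bij_sup_hom_of_embeddings:
  fixes A :: "'a::{finite,sup} \<Rightarrow> 'c::sup" and B :: "'b::{finite,sup} \<Rightarrow> 'c"
  assumes A: "inj A" "sup_hom A" and B: "inj B" "sup_hom B"
    and range: "range B \<subseteq> range A" and card: "card (UNIV :: 'a set) \<le> card (UNIV :: 'b set)"
  shows "\<exists>h::'a \<Rightarrow> 'b. bij h \<and> sup_hom h"
proof -
  have "card (range B) = card (range A)"
    using card card_le_of_embeddings[OF A(1) B(1) range] by (simp add: card_image A(1) B(1))
  hence same_range: "range B = range A"
    using range by (simp add: card_subset_eq)
  define h where "h = inv B \<circ> A"
  have B_h: "B (h x) = A x" for x
    using same_range by (simp add: h_def f_inv_into_f[of "A x" B UNIV])
  have "bij_betw A UNIV (range B)"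
    using A(1) same_range by (simp add: bij_betw_def)
  moreover have "bij_betw (inv B) (range B) UNIV"
    using B(1) by (simp add: bij_betw_inv_into inj_on_imp_bij_betw)
  ultimately have "bij h"
    unfolding h_def by (rule bij_betw_trans)
  moreover have "h (sup x y) = sup (h x) (h y)" for x y
  proof (rule injD[OF B(1)])
    show "B (h (sup x y)) = B (sup (h x) (h y))"
      using A(2) B(2) by (simp add: sup_hom_def B_h)
  qed
  hence "sup_hom h" by (simp add: sup_hom_def)
  ultimately show ?thesis by blast
qed

lemma sup_embeddings_of_semiring_iso:
  fixes R1 :: "('a::{semilattice_sup,order_top} \<Rightarrow> 'a) set"
    and R2 :: "('b::{semilattice_sup,order_top} \<Rightarrow> 'b) set"
  assumes nontriv1: "\<exists>x::'a. x \<noteq> top" and nontriv2: "\<exists>x::'b. x \<noteq> top"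
    and R1: "R1 \<subseteq> JM1"
    and fab1: "\<forall>a b. a \<noteq> top \<longrightarrow> fab a b \<in> R1"
    and fab2: "\<forall>a b. a \<noteq> top \<longrightarrow> fab a b \<in> R2"
    and iso: "semiring_iso R1 R2"
  shows "\<exists>(A::'a \<Rightarrow> 'b \<Rightarrow> 'b) (B::'b \<Rightarrow> 'b \<Rightarrow> 'b).
           inj A \<and> sup_hom A \<and> inj B \<and> sup_hom B \<and> range B \<subseteq> range A"
proof -
  obtain \<phi> where bij: "bij_betw \<phi> R1 R2"
    and hom: "\<forall>f\<in>R1. \<forall>g\<in>R1. \<phi> (sup f g) = sup (\<phi> f) (\<phi> g) \<and> \<phi> (f \<circ> g) = \<phi> f \<circ> \<phi> g"
    using iso by (auto simp: semiring_iso_iff)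
  obtain a :: 'a where a: "a \<noteq> top" using nontriv1 by auto
  have fab_a: "fab a d \<in> R1" for d using fab1 a by blast
  define A where "A = \<phi> \<circ> fab a"
  have inj_\<phi>: "inj_on \<phi> R1"
    using bij by (simp add: bij_betw_def)
  have "inj A"
    unfolding A_def using inj_fab fab_a
    by (intro comp_inj_on inj_on_subset[OF inj_\<phi>]) auto
  moreover have "sup_hom A"
    using hom fab_a sup_hom_fab unfolding A_def sup_hom_def by (metis comp_apply)
  moreover obtain B :: "'b \<Rightarrow> 'b \<Rightarrow> 'b"
    where "inj B" "sup_hom B" and B: "range B \<subseteq> right_multiples R2 (\<phi> (fab a a))"
  proof -
    obtain b :: 'b where "b \<noteq> top" using nontriv2 by auto
    hence "fab b top \<in> R2" using fab2 by blast
    hence "(\<lambda>_. top) \<in> R2" by (simp add: fab_top)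
    moreover have top_R1: "(\<lambda>_. top) \<in> R1" using fab_a[of top] by (simp add: fab_top)
    ultimately have "\<phi> (\<lambda>_. top) = (\<lambda>_. top)"
      using hom by (intro semiring_iso_const_top[OF bij _ R1]) auto
    moreover have "fab a a \<noteq> (\<lambda>_. top)"
      using a by (simp add: fab_def fun_eq_iff) (metis order_refl)
    ultimately have "\<phi> (fab a a) \<noteq> (\<lambda>_. top)"
      using inj_onD[OF inj_\<phi> _ fab_a top_R1] by metis
    thus ?thesis
      using that sup_hom_embedding_into_right_multiples[OF fab2] by blast
  qed
  moreover have "right_multiples R2 (\<phi> (fab a a)) \<subseteq> range A"
  proof -
    have "right_multiples R2 (\<phi> (fab a a)) = \<phi> ` right_multiples R1 (fab a a)"
      using hom by (intro right_multiples_semiring_iso[OF bij _ fab_a]) auto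
    also have "\<dots> \<subseteq> \<phi> ` range (fab a)"
      using right_multiples_fab[OF R1] by (rule image_mono)
    finally show ?thesis by (simp add: A_def image_comp)
  qed
  ultimately show ?thesis using B by blast
qed

theorem proposition6p6:
  fixes R1 :: "('a::{semilattice_sup,order_top,finite} \<Rightarrow> 'a) set"
    and R2 :: "('b::{semilattice_sup,order_top,finite} \<Rightarrow> 'b) set"
  assumes nontriv1: "\<exists>x::'a. x \<noteq> top"
    and nontriv2: "\<exists>x::'b. x \<noteq> top"
    and star1: "star_prop TYPE('a)"
    and star2: "star_prop TYPE('b)"
    and sub1: "subsemiring_JM1 R1"
    and sub2: "subsemiring_JM1 R2"
    and fab1: "\<forall>a b. a \<noteq> top \<longrightarrow> fab a b \<in> R1"
    and fab2: "\<forall>a b. a \<noteq> top \<longrightarrow> fab a b \<in> R2"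
    and below1: "\<forall>f\<in>R1. \<exists>a b. a \<noteq> top \<and> fab a b \<le> f"
    and below2: "\<forall>f\<in>R2. \<exists>a b. a \<noteq> top \<and> fab a b \<le> f"
    and iso: "semiring_iso R1 R2"
  shows "\<exists>h::'a \<Rightarrow> 'b. bij h \<and> (\<forall>x y. h (sup x y) = sup (h x) (h y))"
proof -
  have R1: "R1 \<subseteq> JM1" and R2: "R2 \<subseteq> JM1"
    using sub1 sub2 by (simp_all add: subsemiring_JM1_def)
  obtain A :: "'a \<Rightarrow> 'b \<Rightarrow> 'b" and B :: "'b \<Rightarrow> 'b \<Rightarrow> 'b"
    where A: "inj A" "sup_hom A" and B: "inj B" "sup_hom B" and range: "range B \<subseteq> range A"
    using sup_embeddings_of_semiring_iso[OF nontriv1 nontriv2 R1 fab1 fab2 iso] by blast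
  obtain A' :: "'b \<Rightarrow> 'a \<Rightarrow> 'a" and B' :: "'a \<Rightarrow> 'a \<Rightarrow> 'a"
    where "inj A'" "inj B'" "range B' \<subseteq> range A'"
    using sup_embeddings_of_semiring_iso[OF nontriv2 nontriv1 R2 fab2 fab1 semiring_iso_sym[OF iso sub1]]
    by blast
  hence "card (UNIV :: 'a set) \<le> card (UNIV :: 'b set)" by (rule card_le_of_embeddings)
  then obtain h :: "'a \<Rightarrow> 'b" where "bij h" "sup_hom h"
    using bij_sup_hom_of_embeddings[OF A B range] by blast
  thus ?thesis by (auto simp: sup_hom_def)
qed

end
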